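(* Let $\mathcal U=(V,\tilde V,W,\tilde W,R)$ be a gradient space and let $\mathcal K\subseteq\mathrm{Sob}(\mathcal U)$ be a regular Rellich–Kondrachov cone containing a nonzero element. Then there exists $u\in\mathcal K$, $u\neq0$, such that $$\frac{\|g_u\|_W}{\|u\|_V}=\inf_{v\in\mathcal K,\ v\neq0}\frac{\|g_v\|_W}{\|v\|_V}>0.$$
   Context: Let $\tilde V,\tilde W$ be vector spaces over $\mathbf R$ or $\mathbf C$. A gradient relation is a set $R\subseteq\tilde V\times\tilde W$ such that (G1) if $(u,g)\in R$ and $(u',g')\in R$ then $(u+u',g+g')\in R$; (G2) if $(u,g)\in R$ and $\alpha>0$ then $(\alpha u,\alpha g)\in R$. A gradient space $\mathcal U=(V,\tilde V,W,\tilde W,R)$ consists of vector spaces $\tilde V,\tilde W$, a gradient relation $R\subseteq\tilde V\times\tilde W$, and linear subspaces $V\subseteq\tilde V$, $W\subseteq\tilde W$ such that: (GS1) $V$ is a reflexive Banach space with norm $\|\cdot\|_V$; (GS2) $W$ is a reflexive and strictly convex Banach space with norm $\|\cdot\|_W$; (GS3) if $(u,g)\in R$ with $u\in V$, $g\in W$, then there exists $g'\in W$ with $(-u,g')\in R$; (GS4) if $u,u_i\in V$ and $g,g_i\in W$ with $(u_i,g_i)\in R$ for $i=1,2,\dots$, $\|u-u_i\|_V\to0$ and $\|g-g_i\|_W\to0$, then $(u,g)\in R$. The Sobolev space of $\mathcal U$ is $\mathrm{Sob}(\mathcal U)=\{u\in V:(u,g)\in R\text{ for some }g\in W\}$. Each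 $u\in\mathrm{Sob}(\mathcal U)$ has a unique minimal gradient $g_u\in W$: $(u,g_u)\in R$ and $\|g_u\|_W\le\|g\|_W$ for all $g\in W$ with $(u,g)\in R$. A cone $\mathcal K\subseteq\mathrm{Sob}(\mathcal U)$ (i.e. $u\in\mathcal K,\alpha>0\Rightarrow\alpha u\in\mathcal K$) is a Rellich–Kondrachov cone if for every sequence $\{u_i\}\subseteq\mathcal K$ such that $\{u_i\}$ is bounded in $V$ and $\{g_{u_i}\}$ is bounded in $W$, there is a subsequence converging in $V$ to an element of $\mathcal K$. It is regular if, for $u\in\mathcal K$, $g_u=0$ implies $u=0$. *)

theory Defs
  imports "HOL-Analysis.Analysis"
begin

definition reflexive_space :: "'v::banach itself \<Rightarrow> bool" where
  "reflexive_space _ \<longleftrightarrow>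
     (\<forall>\<Phi> :: ('v \<Rightarrow>\<^sub>L real) \<Rightarrow>\<^sub>L real. \<exists>x::'v. \<forall>f. blinfun_apply \<Phi> f = blinfun_apply f x)"

definition strictly_convex_space :: "'w::real_normed_vector itself \<Rightarrow> bool" where
  "strictly_convex_space _ \<longleftrightarrow>
     (\<forall>x y :: 'w. norm x = 1 \<and> norm y = 1 \<and> x \<noteq> y \<longrightarrow> norm ((1/2) *\<^sub>R (x + y)) < 1)"

definition gradient_relation :: "('a::real_vector \<times> 'b::real_vector) set \<Rightarrow> bool" where
  "gradient_relation R \<longleftrightarrow>
     (\<forall>u g u' g'. (u, g) \<in> R \<and> (u', g') \<in> R \<longrightarrow> (u + u', g + g') \<in> R) \<and>
     (\<forall>u g (\<alpha>::real). (u, g) \<in> R \<and> \<alpha> > 0 \<longrightarrow> (\<alpha> *\<^sub>R u, \<alpha> *\<^sub>R g) \<in> R)"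

text \<open>A gradient space: the Banach spaces V, W are the types 'v, 'w, embedded as
  linear subspaces of the ambient spaces 'a (= V tilde) and 'b (= W tilde) via the
  injective linear maps iV, iW.\<close>
definition gradient_space ::
  "('v::banach \<Rightarrow> 'a::real_vector) \<Rightarrow> ('w::banach \<Rightarrow> 'b::real_vector) \<Rightarrow> ('a \<times> 'b) set \<Rightarrow> bool" where
  "gradient_space iV iW R \<longleftrightarrow>
     linear iV \<and> inj iV \<and> linear iW \<and> inj iW \<and>
     gradient_relation R \<and>
     reflexive_space TYPE('v) \<and>
     reflexive_space TYPE('w) \<and> strictly_convex_space TYPE('w) \<and>
     (\<forall>u g. (iV u, iW g) \<in> R \<longrightarrow> (\<exists>g'. (- iV u, iW g') \<in> R)) \<and>
     (\<forall>u g us gs. (\<forall>i::nat. (iV (us i), iW (gs i)) \<in> R) \<and>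
        (\<lambda>i. norm (u - us i)) \<longlonglongrightarrow> 0 \<and> (\<lambda>i. norm (g - gs i)) \<longlonglongrightarrow> 0
        \<longrightarrow> (iV u, iW g) \<in> R)"

definition Sob :: "('v \<Rightarrow> 'a) \<Rightarrow> ('w \<Rightarrow> 'b) \<Rightarrow> ('a \<times> 'b) set \<Rightarrow> 'v set" where
  "Sob iV iW R = {u. \<exists>g. (iV u, iW g) \<in> R}"

text \<open>The minimal gradient g_u (its existence and uniqueness is a result of the paper).\<close>
definition min_grad :: "('v \<Rightarrow> 'a) \<Rightarrow> ('w::real_normed_vector \<Rightarrow> 'b) \<Rightarrow> ('a \<times> 'b) set \<Rightarrow> 'v \<Rightarrow> 'w" where
  "min_grad iV iW R u =
     (SOME g. (iV u, iW g) \<in> R \<and> (\<forall>g'. (iV u, iW g') \<in> R \<longrightarrow> norm g \<le> norm g'))"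

definition is_cone :: "('v \<Rightarrow> 'a) \<Rightarrow> ('w \<Rightarrow> 'b) \<Rightarrow> ('a \<times> 'b) set \<Rightarrow> 'v::real_vector set \<Rightarrow> bool" where
  "is_cone iV iW R K \<longleftrightarrow> K \<subseteq> Sob iV iW R \<and> (\<forall>u \<in> K. \<forall>\<alpha>::real. \<alpha> > 0 \<longrightarrow> \<alpha> *\<^sub>R u \<in> K)"

definition RK_cone ::
  "('v::real_normed_vector \<Rightarrow> 'a) \<Rightarrow> ('w::real_normed_vector \<Rightarrow> 'b) \<Rightarrow> ('a \<times> 'b) set \<Rightarrow> 'v set \<Rightarrow> bool" where
  "RK_cone iV iW R K \<longleftrightarrow> is_cone iV iW R K \<and>
     (\<forall>us :: nat \<Rightarrow> 'v. (\<forall>i. us i \<in> K) \<and> bounded (range us) \<and>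
        bounded (range (\<lambda>i. min_grad iV iW R (us i)))
        \<longrightarrow> (\<exists>r l. strict_mono r \<and> l \<in> K \<and> (us \<circ> r) \<longlonglongrightarrow> l))"

definition regular_cone ::
  "('v::real_normed_vector \<Rightarrow> 'a) \<Rightarrow> ('w::real_normed_vector \<Rightarrow> 'b) \<Rightarrow> ('a \<times> 'b) set \<Rightarrow> 'v set \<Rightarrow> bool" where
  "regular_cone iV iW R K \<longleftrightarrow> (\<forall>u \<in> K. min_grad iV iW R u = 0 \<longrightarrow> u = 0)"

end

theory Submission
  imports Defs
begin

text \<open>Normalize a minimizing sequence for \<open>\<parallel>g\<^sub>u\<parallel> / \<parallel>u\<parallel>\<close> in \<open>V\<close>. Its minimal gradients are
  bounded, so the Rellich--Kondrachov property gives a subsequence converging to some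
  \<open>l \<in> K\<close> with \<open>\<parallel>l\<parallel> = 1\<close>. The infimum is attained at \<open>l\<close> because \<open>u \<mapsto> \<parallel>g\<^sub>u\<parallel>\<close> is lower
  semicontinuous: the gradients of approximants of \<open>l\<close> form nested bounded closed convex
  subsets of the reflexive space \<open>W\<close>, which have a common point (by Hahn--Banach and strict
  separation), and by (GS4) this point is a gradient of \<open>l\<close>. The same argument applied to a
  constant sequence shows that minimal gradients exist. Regularity makes the infimum positive.\<close>

section \<open>Hahn--Banach extension\<close>

definition sublinear :: "('a::real_vector \<Rightarrow> real) \<Rightarrow> bool" where
  "sublinear p \<longleftrightarrow> (\<forall>x y. p (x + y) \<le> p x + p y) \<and> (\<forall>c x. c \<ge> 0 \<longrightarrow> p (c *\<^sub>R x) = c * p x)"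

lemma sublinear_add: "sublinear p \<Longrightarrow> p (x + y) \<le> p x + p y"
  unfolding sublinear_def by blast

lemma sublinear_scaleR: "sublinear p \<Longrightarrow> c \<ge> 0 \<Longrightarrow> p (c *\<^sub>R x) = c * p x"
  unfolding sublinear_def by blast

lemma sublinear_zero: "sublinear p \<Longrightarrow> p 0 = 0"
  using sublinear_scaleR[of p 0 0] by simp

text \<open>Linear functionals are represented by their graphs, so that partially defined ones
  can be ordered by inclusion for Zorn's lemma.\<close>
definition dominated_linear_graphs :: "('a::real_vector \<Rightarrow> real) \<Rightarrow> 'a \<Rightarrow> ('a \<times> real) set set" where
  "dominated_linear_graphs p z = {G. (\<forall>t. (t *\<^sub>R z, t * p z) \<in> G) \<and>
     (\<forall>x y y'. (x, y) \<in> G \<longrightarrow> (x, y') \<in> G \<longrightarrow> y = y') \<and>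
     (\<forall>x y x' y'. (x, y) \<in> G \<longrightarrow> (x', y') \<in> G \<longrightarrow> (x + x', y + y') \<in> G) \<and>
     (\<forall>x y c. (x, y) \<in> G \<longrightarrow> (c *\<^sub>R x, c * y) \<in> G) \<and>
     (\<forall>x y. (x, y) \<in> G \<longrightarrow> y \<le> p x)}"

lemma dominated_linear_graphsD:
  assumes "G \<in> dominated_linear_graphs p z"
  shows "\<And>x y y'. (x, y) \<in> G \<Longrightarrow> (x, y') \<in> G \<Longrightarrow> y = y'"
    and "\<And>x y x' y'. (x, y) \<in> G \<Longrightarrow> (x', y') \<in> G \<Longrightarrow> (x + x', y + y') \<in> G"
    and "\<And>x y c. (x, y) \<in> G \<Longrightarrow> (c *\<^sub>R x, c * y) \<in> G"
    and "\<And>x y. (x, y) \<in> G \<Longrightarrow> y \<le> p x"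
    and "\<And>t. (t *\<^sub>R z, t * p z) \<in> G"
  using assms unfolding dominated_linear_graphs_def by blast+

lemma line_graph_in_dominated_linear_graphs:
  assumes p: "sublinear p"
  shows "range (\<lambda>t. (t *\<^sub>R z, t * p z)) \<in> dominated_linear_graphs p z"
proof -
  have p0: "p 0 = 0" using sublinear_zero[OF p] .
  have dominated: "t * p z \<le> p (t *\<^sub>R z)" for t
  proof (cases "t \<ge> 0")
    case True then show ?thesis using sublinear_scaleR[OF p] by simp
  next
    case False
    have "p (t *\<^sub>R z) = (- t) * p (- z)" using sublinear_scaleR[OF p, of "- t" "- z"] False by simp
    moreover have "0 \<le> p z + p (- z)" using sublinear_add[OF p, of z "- z"] p0 by simp
    then have "t * (p z + p (- z)) \<le> 0" using False by (intro mult_nonpos_nonneg) auto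
    ultimately show ?thesis by (simp add: distrib_left)
  qed
  have functional: "t *\<^sub>R z = t' *\<^sub>R z \<Longrightarrow> t * p z = t' * p z" for t t'
    by (cases "z = 0") (simp_all add: p0)
  show ?thesis
    unfolding dominated_linear_graphs_def
  proof (intro CollectI conjI allI impI)
    show "(x + x', y + y') \<in> range (\<lambda>t. (t *\<^sub>R z, t * p z))"
      if xy: "(x, y) \<in> range (\<lambda>t. (t *\<^sub>R z, t * p z))"
        and xy': "(x', y') \<in> range (\<lambda>t. (t *\<^sub>R z, t * p z))" for x y x' y'
    proof -
      obtain t t' where "x = t *\<^sub>R z" "y = t * p z" "x' = t' *\<^sub>R z" "y' = t' * p z"
        using xy xy' by blast
      then have "(x + x', y + y') = ((t + t') *\<^sub>R z, (t + t') * p z)" by (simp add: algebra_simps)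
      then show ?thesis by (simp only:) (rule rangeI)
    qed
    show "(c *\<^sub>R x, c * y) \<in> range (\<lambda>t. (t *\<^sub>R z, t * p z))"
      if xy: "(x, y) \<in> range (\<lambda>t. (t *\<^sub>R z, t * p z))" for x y c
    proof -
      obtain t where "x = t *\<^sub>R z" "y = t * p z" using xy by blast
      then have "(c *\<^sub>R x, c * y) = ((c * t) *\<^sub>R z, (c * t) * p z)" by simp
      then show ?thesis by (simp only:) (rule rangeI)
    qed
  qed (use functional dominated in auto)
qed

lemma dominated_extension_constant:
  assumes p: "sublinear p" and M: "M \<in> dominated_linear_graphs p z"
  obtains c where "\<And>x y t. (x, y) \<in> M \<Longrightarrow> y + t * c \<le> p (x + t *\<^sub>R w)"
proof -
  note MD = dominated_linear_graphsD[OF M]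
  have zero: "(0, 0) \<in> M" using MD(5)[of 0] by simp
  define S where "S = {y' - p (x' - w) | x' y'. (x', y') \<in> M}"
  define c where "c = Sup S"
  have S_bound: "s \<le> p (x + w) - y" if "s \<in> S" "(x, y) \<in> M" for s x y
  proof -
    obtain x' y' where s: "s = y' - p (x' - w)" "(x', y') \<in> M" using \<open>s \<in> S\<close> unfolding S_def by blast
    have "y + y' \<le> p (x + x')" using MD(2)[OF \<open>(x, y) \<in> M\<close> s(2)] MD(4) by blast
    also have "\<dots> = p ((x + w) + (x' - w))" by (simp add: algebra_simps)
    also have "\<dots> \<le> p (x + w) + p (x' - w)" by (rule sublinear_add[OF p])
    finally show ?thesis using s by simp
  qed
  have "bdd_above S" using S_bound[OF _ zero] by (metis bdd_aboveI)
  then have c_upper: "y' - p (x' - w) \<le> c" if "(x', y') \<in> M" for x' y'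
    unfolding c_def using that by (intro cSup_upper) (auto simp: S_def)
  have c_lower: "c \<le> p (x + w) - y" if "(x, y) \<in> M" for x y
    unfolding c_def using zero S_bound[OF _ that] by (intro cSup_least) (auto simp: S_def)
  have "y + t * c \<le> p (x + t *\<^sub>R w)" if xy: "(x, y) \<in> M" for x y t
  proof -
    consider "t > 0" | "t = 0" | "t < 0" by linarith
    then show ?thesis
    proof cases
      case 1
      have "t * c \<le> t * (p ((1/t) *\<^sub>R x + w) - (1/t) * y)"
        using c_lower[OF MD(3)[OF xy, of "1/t"]] 1 by (intro mult_left_mono) auto
      also have "\<dots> = p (t *\<^sub>R ((1/t) *\<^sub>R x + w)) - y"
        using sublinear_scaleR[OF p, of t] 1 by (simp add: right_diff_distrib)
      also have "t *\<^sub>R ((1/t) *\<^sub>R x + w) = x + t *\<^sub>R w" using 1 by (simp add: scaleR_add_right)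
      finally show ?thesis by simp
    next
      case 2 then show ?thesis using MD(4)[OF xy] by simp
    next
      case 3
      define s where "s = - t"
      have s: "s > 0" using 3 s_def by simp
      have "s * ((1/s) * y - p ((1/s) *\<^sub>R x - w)) \<le> s * c"
        using c_upper[OF MD(3)[OF xy, of "1/s"]] s by (simp add: mult_left_mono)
      then have "y - s * p ((1/s) *\<^sub>R x - w) \<le> s * c" using s by (simp add: right_diff_distrib)
      also have "s * p ((1/s) *\<^sub>R x - w) = p (s *\<^sub>R ((1/s) *\<^sub>R x - w))"
        using sublinear_scaleR[OF p, of s] s by simp
      also have "s *\<^sub>R ((1/s) *\<^sub>R x - w) = x + t *\<^sub>R w" using s by (simp add: scaleR_diff_right s_def)
      finally show ?thesis using s_def by simp
    qed
  qed
  then show thesis by (rule that)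
qed

lemma dominated_linear_graph_extend:
  assumes p: "sublinear p" and M: "M \<in> dominated_linear_graphs p z" and w: "\<nexists>y. (w, y) \<in> M"
  shows "\<exists>M' \<in> dominated_linear_graphs p z. M \<subset> M'"
proof -
  note MD = dominated_linear_graphsD[OF M]
  obtain c where dominated: "\<And>x y t. (x, y) \<in> M \<Longrightarrow> y + t * c \<le> p (x + t *\<^sub>R w)"
    using dominated_extension_constant[OF p M] by blast
  define M' where "M' = {(x + t *\<^sub>R w, y + t * c) | x y t. (x, y) \<in> M}"
  have "M \<subseteq> M'" unfolding M'_def by force
  moreover have "(w, c) \<in> M'" unfolding M'_def using MD(5)[of 0] by force
  moreover have functional: "y1 = y2" if xy1: "(x, y1) \<in> M'" and xy2: "(x, y2) \<in> M'" for x y1 y2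
  proof -
    obtain a1 b1 t1 where 1: "x = a1 + t1 *\<^sub>R w" "y1 = b1 + t1 * c" "(a1, b1) \<in> M"
      using xy1 unfolding M'_def by blast
    obtain a2 b2 t2 where 2: "x = a2 + t2 *\<^sub>R w" "y2 = b2 + t2 * c" "(a2, b2) \<in> M"
      using xy2 unfolding M'_def by blast
    have diff: "(a1 - a2, b1 - b2) \<in> M" using MD(2)[OF 1(3) MD(3)[OF 2(3), of "-1"]] by simp
    have "t1 = t2"
    proof (rule ccontr)
      assume ne: "t1 \<noteq> t2"
      have "a1 - a2 = (t2 - t1) *\<^sub>R w" using 1 2 by (simp add: algebra_simps)
      then have "(w, (1/(t2 - t1)) * (b1 - b2)) \<in> M" using MD(3)[OF diff, of "1/(t2 - t1)"] ne by simp
      then show False using w by blast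
    qed
    then show ?thesis using 1 2 MD(1) by auto
  qed
  moreover have "M' \<in> dominated_linear_graphs p z"
    unfolding dominated_linear_graphs_def
  proof (intro CollectI conjI allI impI)
    show "(x + x', y + y') \<in> M'" if xy: "(x, y) \<in> M'" and xy': "(x', y') \<in> M'" for x y x' y'
    proof -
      obtain a1 b1 t1 where 1: "x = a1 + t1 *\<^sub>R w" "y = b1 + t1 * c" "(a1, b1) \<in> M"
        using xy unfolding M'_def by blast
      obtain a2 b2 t2 where 2: "x' = a2 + t2 *\<^sub>R w" "y' = b2 + t2 * c" "(a2, b2) \<in> M"
        using xy' unfolding M'_def by blast
      have "x + x' = (a1 + a2) + (t1 + t2) *\<^sub>R w" "y + y' = (b1 + b2) + (t1 + t2) * c"
        using 1 2 by (simp_all add: algebra_simps)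
      then show ?thesis using MD(2)[OF 1(3) 2(3)] unfolding M'_def by blast
    qed
    show "(a *\<^sub>R x, a * y) \<in> M'" if xy: "(x, y) \<in> M'" for x y a
    proof -
      obtain a1 b1 t1 where 1: "x = a1 + t1 *\<^sub>R w" "y = b1 + t1 * c" "(a1, b1) \<in> M"
        using xy unfolding M'_def by blast
      have "a *\<^sub>R x = a *\<^sub>R a1 + (a * t1) *\<^sub>R w" "a * y = a * b1 + (a * t1) * c"
        using 1 by (simp_all add: algebra_simps)
      then show ?thesis using MD(3)[OF 1(3)] unfolding M'_def by blast
    qed
    show "(t *\<^sub>R z, t * p z) \<in> M'" for t using \<open>M \<subseteq> M'\<close> MD(5) by blast
    show "y = y'" if "(x, y) \<in> M'" "(x, y') \<in> M'" for x y y' using functional that .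
    show "y \<le> p x" if "(x, y) \<in> M'" for x y using that dominated unfolding M'_def by blast
  qed
  ultimately show ?thesis using w by blast
qed

lemma Union_chain_dominated_linear_graphs:
  assumes "C \<noteq> {}" and "subset.chain (dominated_linear_graphs p z) C"
  shows "\<Union>C \<in> dominated_linear_graphs p z"
proof -
  have C: "\<And>G. G \<in> C \<Longrightarrow> G \<in> dominated_linear_graphs p z"
    and linear: "\<And>X Y. X \<in> C \<Longrightarrow> Y \<in> C \<Longrightarrow> X \<subseteq> Y \<or> Y \<subseteq> X"
    using assms(2) unfolding subset.chain_def by auto
  have common: "\<exists>G\<in>C. a \<in> G \<and> b \<in> G" if ab: "a \<in> \<Union>C" "b \<in> \<Union>C" for a b
  proof -
    obtain G1 G2 where "G1 \<in> C" "G2 \<in> C" "a \<in> G1" "b \<in> G2" using ab by blast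
    then show ?thesis using linear[of G1 G2] by blast
  qed
  obtain G0 where "G0 \<in> C" using assms(1) by auto
  show ?thesis unfolding dominated_linear_graphs_def
  proof (intro CollectI conjI allI impI)
    show "y = y'" if "(x, y) \<in> \<Union>C" "(x, y') \<in> \<Union>C" for x y y'
      using common[OF that] C dominated_linear_graphsD(1) by metis
    show "(x + x', y + y') \<in> \<Union>C" if "(x, y) \<in> \<Union>C" "(x', y') \<in> \<Union>C" for x y x' y'
      using common[OF that] C dominated_linear_graphsD(2) by (metis UnionI)
    show "(t *\<^sub>R z, t * p z) \<in> \<Union>C" for t using \<open>G0 \<in> C\<close> C dominated_linear_graphsD(5) by blast
    show "(a *\<^sub>R x, a * y) \<in> \<Union>C" if "(x, y) \<in> \<Union>C" for x y a
      using that C dominated_linear_graphsD(3) by (metis UnionE UnionI)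
    show "y \<le> p x" if "(x, y) \<in> \<Union>C" for x y
      using that C dominated_linear_graphsD(4) by (metis UnionE)
  qed
qed

theorem hahn_banach:
  fixes p :: "'a::real_vector \<Rightarrow> real"
  assumes p: "sublinear p"
  shows "\<exists>f. (\<forall>x y. f (x + y) = f x + f y) \<and> (\<forall>a x. f (a *\<^sub>R x) = a * f x) \<and>
             (\<forall>x. f x \<le> p x) \<and> f z = p z"
proof -
  obtain M where M: "M \<in> dominated_linear_graphs p z"
    and maximal: "\<And>X. X \<in> dominated_linear_graphs p z \<Longrightarrow> M \<subseteq> X \<Longrightarrow> X = M"
    using subset_Zorn_nonempty[OF _ Union_chain_dominated_linear_graphs]
      line_graph_in_dominated_linear_graphs[OF p] by (metis empty_iff)
  note MD = dominated_linear_graphsD[OF M]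
  have total: "\<exists>y. (x, y) \<in> M" for x
    using dominated_linear_graph_extend[OF p M, of x] maximal by blast
  define f where "f x = (THE y. (x, y) \<in> M)" for x
  have f_eq: "f x = y" if "(x, y) \<in> M" for x y
    unfolding f_def using that MD(1) by blast
  have graph: "(x, f x) \<in> M" for x
    using total[of x] f_eq by blast
  show ?thesis
  proof (intro exI conjI allI)
    show "f (x + y) = f x + f y" for x y using f_eq[OF MD(2)[OF graph graph]] .
    show "f (a *\<^sub>R x) = a * f x" for a x using f_eq[OF MD(3)[OF graph]] .
    show "f x \<le> p x" for x using MD(4)[OF graph] .
    show "f z = p z" using f_eq[OF MD(5)[of 1]] by simp
  qed
qed

section \<open>Separation of a point from a closed convex set\<close>

definition minkowski_functional :: "'a::real_normed_vector set \<Rightarrow> 'a \<Rightarrow> real" where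
  "minkowski_functional D y = Inf {t. 0 < t \<and> (1/t) *\<^sub>R y \<in> D}"

locale convex_zero_nbhd =
  fixes D :: "'a::real_normed_vector set" and \<epsilon> :: real
  assumes convex: "convex D" and eps_pos: "\<epsilon> > 0" and ball_subset: "\<And>y. norm y < \<epsilon> \<Longrightarrow> y \<in> D"
begin

definition scales :: "'a \<Rightarrow> real set" where
  "scales y = {t. 0 < t \<and> (1/t) *\<^sub>R y \<in> D}"

lemma minkowski_functional_eq_Inf: "minkowski_functional D y = Inf (scales y)"
  unfolding minkowski_functional_def scales_def ..

lemma zero_mem: "0 \<in> D"
  using ball_subset eps_pos by simp

lemma scaleR_mem: "y \<in> D \<Longrightarrow> 0 \<le> a \<Longrightarrow> a \<le> 1 \<Longrightarrow> a *\<^sub>R y \<in> D"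
  using convexD[OF convex, of y 0 a "1 - a"] zero_mem by simp

lemma scales_large: "0 < t \<Longrightarrow> norm y < \<epsilon> * t \<Longrightarrow> t \<in> scales y"
  using ball_subset by (simp add: scales_def pos_divide_less_eq mult.commute)

lemma scales_bdd_below: "bdd_below (scales y)"
  unfolding scales_def by (rule bdd_belowI[of _ 0]) auto

lemma scales_upward_closed:
  assumes t: "t \<in> scales y" and "t \<le> s"
  shows "s \<in> scales y"
proof -
  have tpos: "0 < t" and mem: "(1/t) *\<^sub>R y \<in> D" using t unfolding scales_def by auto
  then have "0 < s" using \<open>t \<le> s\<close> by simp
  have "(t/s) *\<^sub>R ((1/t) *\<^sub>R y) \<in> D"
    using \<open>0 < s\<close> \<open>t \<le> s\<close> tpos by (intro scaleR_mem[OF mem]) auto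
  then show ?thesis using \<open>0 < s\<close> tpos unfolding scales_def by simp
qed

lemma minkowski_le_norm: "minkowski_functional D y \<le> norm y / \<epsilon>"
proof (rule field_le_epsilon)
  fix e :: real assume "0 < e"
  then have "norm y / \<epsilon> + e \<in> scales y"
    using eps_pos by (intro scales_large) (auto simp: distrib_left add_nonneg_pos)
  then show "minkowski_functional D y \<le> norm y / \<epsilon> + e"
    unfolding minkowski_functional_eq_Inf by (rule cInf_lower[OF _ scales_bdd_below])
qed

lemma scales_nonempty: "scales y \<noteq> {}"
  using scales_large[of "norm y / \<epsilon> + 1" y] eps_pos by (auto simp: distrib_left add_nonneg_pos)

lemma scales_above_minkowski: "minkowski_functional D y < s \<Longrightarrow> s \<in> scales y"
  using cInf_less_iff[OF scales_nonempty scales_bdd_below] scales_upward_closed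
  unfolding minkowski_functional_eq_Inf by (meson less_imp_le)

lemma minkowski_le_scale: "t \<in> scales y \<Longrightarrow> minkowski_functional D y \<le> t"
  unfolding minkowski_functional_eq_Inf by (rule cInf_lower[OF _ scales_bdd_below])

lemma minkowski_add:
  "minkowski_functional D (y1 + y2) \<le> minkowski_functional D y1 + minkowski_functional D y2"
proof (rule field_le_epsilon)
  fix e :: real assume "0 < e"
  define s1 where "s1 = minkowski_functional D y1 + e/2"
  define s2 where "s2 = minkowski_functional D y2 + e/2"
  have "s1 \<in> scales y1" "s2 \<in> scales y2"
    using scales_above_minkowski \<open>0 < e\<close> unfolding s1_def s2_def by simp_all
  then have pos: "0 < s1" "0 < s2" and mem: "(1/s1) *\<^sub>R y1 \<in> D" "(1/s2) *\<^sub>R y2 \<in> D"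
    unfolding scales_def by auto
  have "(s1/(s1+s2)) *\<^sub>R ((1/s1) *\<^sub>R y1) + (s2/(s1+s2)) *\<^sub>R ((1/s2) *\<^sub>R y2) \<in> D"
    using pos by (intro convexD[OF convex mem]) (auto simp: add_divide_distrib[symmetric])
  then have "s1 + s2 \<in> scales (y1 + y2)"
    using pos unfolding scales_def by (simp add: scaleR_add_right)
  then show "minkowski_functional D (y1 + y2) \<le> minkowski_functional D y1 + minkowski_functional D y2 + e"
    using minkowski_le_scale unfolding s1_def s2_def by fastforce
qed

lemma minkowski_scaleR_le:
  assumes "0 < c"
  shows "minkowski_functional D (c *\<^sub>R y) \<le> c * minkowski_functional D y"
proof (rule field_le_epsilon)
  fix e :: real assume "0 < e"
  define s where "s = minkowski_functional D y + e / c"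
  have "s \<in> scales y" using scales_above_minkowski \<open>0 < e\<close> assms unfolding s_def by simp
  then have "c * s \<in> scales (c *\<^sub>R y)" using assms unfolding scales_def by simp
  then show "minkowski_functional D (c *\<^sub>R y) \<le> c * minkowski_functional D y + e"
    using minkowski_le_scale assms unfolding s_def by (fastforce simp: distrib_left)
qed

lemma minkowski_nonneg: "0 \<le> minkowski_functional D y"
  unfolding minkowski_functional_eq_Inf using scales_nonempty
  by (rule cInf_greatest) (auto simp: scales_def)

lemma sublinear_minkowski: "sublinear (minkowski_functional D)"
  unfolding sublinear_def
proof (intro conjI allI impI)
  show "minkowski_functional D (c *\<^sub>R y) = c * minkowski_functional D y" if "0 \<le> c" for c y
  proof (cases "c = 0")
    case True
    then show ?thesis using minkowski_le_norm[of 0] minkowski_nonneg[of 0] by simp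
  next
    case False
    then have "0 < c" using that by simp
    have "minkowski_functional D ((1/c) *\<^sub>R (c *\<^sub>R y)) \<le> (1/c) * minkowski_functional D (c *\<^sub>R y)"
      using \<open>0 < c\<close> by (intro minkowski_scaleR_le) simp
    then have "c * minkowski_functional D y \<le> minkowski_functional D (c *\<^sub>R y)"
      using \<open>0 < c\<close> by (simp add: field_simps)
    then show ?thesis using minkowski_scaleR_le[OF \<open>0 < c\<close>, of y] by linarith
  qed
qed (rule minkowski_add)

lemma minkowski_le_1: "y \<in> D \<Longrightarrow> minkowski_functional D y \<le> 1"
  by (rule minkowski_le_scale) (simp add: scales_def)

lemma minkowski_ge_1: "y \<notin> D \<Longrightarrow> 1 \<le> minkowski_functional D y"
  using scales_above_minkowski[of y 1] unfolding scales_def by force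

end

lemma separation_closed_convex_point:
  fixes C :: "'a::real_normed_vector set"
  assumes "closed C" and "convex C" and "C \<noteq> {}" and "x \<notin> C"
  shows "\<exists>f::'a \<Rightarrow>\<^sub>L real. \<exists>\<delta>>0. \<forall>c\<in>C. f c + \<delta> \<le> f x"
proof -
  obtain c0 where c0: "c0 \<in> C" using assms(3) by blast
  define \<epsilon> where "\<epsilon> = infdist x C"
  have eps_pos: "\<epsilon> > 0" unfolding \<epsilon>_def by (rule infdist_pos_not_in_closed[OF assms(1,3,4)])
  have far: "\<epsilon> \<le> norm (x - c)" if "c \<in> C" for c
    using infdist_le[OF that, of x] unfolding \<epsilon>_def by (simp add: dist_norm)
  text \<open>The open \<open>\<epsilon>\<close>-neighbourhood of \<open>C\<close>, translated to contain \<open>0\<close>; its Minkowski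
    functional yields the separating functional via Hahn--Banach.\<close>
  define D where "D = {y. \<exists>c\<in>C. norm (y + c0 - c) < \<epsilon>}"
  have "convex D"
    unfolding D_def
  proof (rule convexI, clarsimp)
    fix y1 y2 c1 c2 and u v :: real
    assume "0 \<le> u" "0 \<le> v" "u + v = 1" and c: "c1 \<in> C" "c2 \<in> C"
      and near: "norm (y1 + c0 - c1) < \<epsilon>" "norm (y2 + c0 - c2) < \<epsilon>"
    have "u *\<^sub>R y1 + v *\<^sub>R y2 + c0 - (u *\<^sub>R c1 + v *\<^sub>R c2) = u *\<^sub>R (y1 + c0 - c1) + v *\<^sub>R (y2 + c0 - c2)"
      using \<open>u + v = 1\<close> by (simp add: algebra_simps flip: scaleR_add_left)
    also have "norm \<dots> \<le> u * norm (y1 + c0 - c1) + v * norm (y2 + c0 - c2)"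
      using \<open>0 \<le> u\<close> \<open>0 \<le> v\<close> by (metis abs_of_nonneg norm_scaleR norm_triangle_ineq)
    also have "\<dots> < \<epsilon>"
      using \<open>0 \<le> u\<close> \<open>0 \<le> v\<close> \<open>u + v = 1\<close> near by (intro convex_bound_lt) auto
    finally show "\<exists>c\<in>C. norm (u *\<^sub>R y1 + v *\<^sub>R y2 + c0 - c) < \<epsilon>"
      using convexD[OF assms(2) c] \<open>0 \<le> u\<close> \<open>0 \<le> v\<close> \<open>u + v = 1\<close> by blast
  qed
  moreover have "y \<in> D" if "norm y < \<epsilon>" for y
    unfolding D_def using c0 that by force
  ultimately interpret convex_zero_nbhd D \<epsilon> using eps_pos by unfold_locales auto
  define z where "z = x - c0"
  have "z \<notin> D" unfolding D_def z_def using far by force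
  then have "z \<noteq> 0" using zero_mem by auto
  obtain f where f_add: "\<And>a b. f (a + b) = f a + f b" and f_scaleR: "\<And>a v. f (a *\<^sub>R v) = a * f v"
    and f_le: "\<And>v. f v \<le> minkowski_functional D v" and f_z: "f z = minkowski_functional D z"
    using hahn_banach[OF sublinear_minkowski, of z] by blast
  have f_minus: "f (- v) = - f v" for v using f_scaleR[of "-1" v] by simp
  have "\<bar>f v\<bar> \<le> norm v * (1/\<epsilon>)" for v
    using f_le[of v] minkowski_le_norm[of v] f_le[of "- v"] minkowski_le_norm[of "- v"] f_minus[of v]
    by (simp add: abs_le_iff)
  then have "bounded_linear f"
    by (intro bounded_linear_intro[where K="1/\<epsilon>"]) (use f_add f_scaleR in auto)
  have f_z_ge_1: "1 \<le> f z" using f_z minkowski_ge_1[OF \<open>z \<notin> D\<close>] by simp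
  define k where "k = \<epsilon> / (2 * norm z)"
  have "k > 0" unfolding k_def using eps_pos \<open>z \<noteq> 0\<close> by simp
  have "f c + k \<le> f x" if "c \<in> C" for c
  proof -
    have "norm (k *\<^sub>R z) < \<epsilon>" unfolding k_def using eps_pos \<open>z \<noteq> 0\<close> by simp
    then have "(c - c0) + k *\<^sub>R z \<in> D" unfolding D_def using that by force
    then have "f ((c - c0) + k *\<^sub>R z) \<le> 1" using f_le minkowski_le_1 order_trans by blast
    moreover have "f ((c - c0) + k *\<^sub>R z) = f c - f c0 + k * f z"
      using f_add[of "c - c0" "k *\<^sub>R z"] f_add[of "c - c0" c0] f_scaleR[of k z] by simp
    moreover have "k \<le> k * f z" using f_z_ge_1 \<open>k > 0\<close> by simp
    moreover have "f x = f z + f c0" using f_add[of z c0] unfolding z_def by simp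
    ultimately show ?thesis using f_z_ge_1 by linarith
  qed
  then show ?thesis
    using \<open>k > 0\<close> bounded_linear_Blinfun_apply[OF \<open>bounded_linear f\<close>] by (intro exI[of _ "Blinfun f"] exI[of _ k]) auto
qed

section \<open>Nested closed convex sets in a reflexive space\<close>

text \<open>Only meaningful for bounded sequences; otherwise the value is junk.\<close>
definition real_limsup :: "(nat \<Rightarrow> real) \<Rightarrow> real" where
  "real_limsup a = real_of_ereal (limsup (\<lambda>n. ereal (a n)))"

lemma limsup_ereal_eq_real_limsup:
  assumes "\<And>n. \<bar>a n\<bar> \<le> K"
  shows "limsup (\<lambda>n. ereal (a n)) = ereal (real_limsup a)"
proof -
  have bounds: "a n \<le> K" "- K \<le> a n" for n using assms[of n] by (auto simp: abs_le_iff)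
  have "limsup (\<lambda>n. ereal (a n)) \<le> ereal K"
    using bounds by (intro Limsup_bounded always_eventually) simp
  moreover have "ereal (- K) \<le> liminf (\<lambda>n. ereal (a n))"
    using bounds by (intro Liminf_bounded always_eventually) simp
  then have "ereal (- K) \<le> limsup (\<lambda>n. ereal (a n))"
    using Liminf_le_Limsup[of sequentially "\<lambda>n. ereal (a n)"] by simp
  ultimately show ?thesis
    unfolding real_limsup_def by (cases "limsup (\<lambda>n. ereal (a n))") auto
qed

lemma real_limsup_add_le:
  assumes "\<And>n. \<bar>a n\<bar> \<le> K" "\<And>n. \<bar>b n\<bar> \<le> L"
  shows "real_limsup (\<lambda>n. a n + b n) \<le> real_limsup a + real_limsup b"
proof -
  have sum_bound: "\<bar>a n + b n\<bar> \<le> K + L" for n using assms(1)[of n] assms(2)[of n] by linarith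
  then show ?thesis
    using ereal_limsup_add_mono[of "\<lambda>n. ereal (a n)" "\<lambda>n. ereal (b n)"]
    by (simp add: limsup_ereal_eq_real_limsup[OF sum_bound] limsup_ereal_eq_real_limsup[OF assms(1)]
        limsup_ereal_eq_real_limsup[OF assms(2)])
qed

lemma real_limsup_cmult:
  assumes "\<And>n. \<bar>a n\<bar> \<le> K" "0 \<le> c"
  shows "real_limsup (\<lambda>n. c * a n) = c * real_limsup a"
proof -
  have scaled_bound: "\<bar>c * a n\<bar> \<le> c * K" for n
    using mult_left_mono[OF assms(1)[of n] assms(2)] assms(2) by (simp add: abs_mult)
  then show ?thesis
    using limsup_ereal_mult_left[OF assms(2), of "\<lambda>n. ereal (a n)"]
    by (simp add: limsup_ereal_eq_real_limsup[OF scaled_bound] limsup_ereal_eq_real_limsup[OF assms(1)])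
qed

lemma real_limsup_le:
  assumes "\<And>n. \<bar>a n\<bar> \<le> K" "\<And>n. n \<ge> N \<Longrightarrow> a n \<le> s"
  shows "real_limsup a \<le> s"
proof -
  have "limsup (\<lambda>n. ereal (a n)) \<le> ereal s"
    using assms(2) by (intro Limsup_bounded eventually_sequentiallyI) auto
  then show ?thesis using limsup_ereal_eq_real_limsup[OF assms(1)] by simp
qed

text \<open>The functional \<open>f \<mapsto> limsup f(x\<^sub>n)\<close> on the dual is sublinear; a linear functional
  below it is bounded, hence by reflexivity evaluation at some point \<open>x\<close>.\<close>
lemma reflexive_limsup_point:
  fixes xs :: "nat \<Rightarrow> 'w::banach"
  assumes refl: "reflexive_space TYPE('w)" and bounded: "\<And>n. norm (xs n) \<le> B"
  shows "\<exists>x. \<forall>f::'w \<Rightarrow>\<^sub>L real. f x \<le> real_limsup (\<lambda>n. f (xs n))"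
proof -
  have f_bound: "\<bar>f (xs n)\<bar> \<le> norm f * B" for f :: "'w \<Rightarrow>\<^sub>L real" and n
    using norm_blinfun[of f "xs n"] mult_left_mono[OF bounded[of n] norm_ge_zero[of f]] by simp
  define p where "p f = real_limsup (\<lambda>n. f (xs n))" for f :: "'w \<Rightarrow>\<^sub>L real"
  have "sublinear p"
    unfolding sublinear_def p_def
    using real_limsup_add_le[OF f_bound f_bound] real_limsup_cmult[OF f_bound]
    by (simp add: blinfun.add_left blinfun.scaleR_left)
  then obtain \<Phi> where \<Phi>_add: "\<And>a b. \<Phi> (a + b) = \<Phi> a + \<Phi> b"
    and \<Phi>_scaleR: "\<And>a v. \<Phi> (a *\<^sub>R v) = a * \<Phi> v" and \<Phi>_le: "\<And>v. \<Phi> v \<le> p v"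
    using hahn_banach[of p 0] by blast
  have p_le: "p f \<le> norm f * B" for f
    unfolding p_def using f_bound by (rule real_limsup_le) (use f_bound abs_le_D1 in blast)
  have "\<Phi> (- f) = - \<Phi> f" for f using \<Phi>_scaleR[of "-1" f] by simp
  then have "\<bar>\<Phi> f\<bar> \<le> norm f * B" for f
    using \<Phi>_le[of f] p_le[of f] \<Phi>_le[of "- f"] p_le[of "- f"] by (simp add: abs_le_iff)
  then have "bounded_linear \<Phi>"
    by (intro bounded_linear_intro[where K=B]) (use \<Phi>_add \<Phi>_scaleR in auto)
  moreover obtain x where "\<And>f. Blinfun \<Phi> f = f x"
    using refl unfolding reflexive_space_def by blast
  ultimately have "\<Phi> f = f x" for f by (metis bounded_linear_Blinfun_apply)
  then show ?thesis using \<Phi>_le unfolding p_def by metis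
qed

lemma reflexive_nested_closed_convex_nonempty:
  fixes C :: "nat \<Rightarrow> 'w::banach set"
  assumes refl: "reflexive_space TYPE('w)"
    and closed: "\<And>n. closed (C n)" and convex: "\<And>n. convex (C n)" and nonempty: "\<And>n. C n \<noteq> {}"
    and decreasing: "\<And>n. C (Suc n) \<subseteq> C n" and bounded: "bounded (C 0)"
  shows "\<exists>x. \<forall>n. x \<in> C n"
proof -
  have "decseq C" using decreasing by (rule decseq_SucI)
  then have C_mono: "m \<le> n \<Longrightarrow> C n \<subseteq> C m" for m n by (simp add: decseq_def)
  obtain B where B: "\<And>y. y \<in> C 0 \<Longrightarrow> norm y \<le> B" using bounded unfolding bounded_iff by blast
  define xs where "xs n = (SOME y. y \<in> C n)" for n
  have xs_mem: "xs n \<in> C n" for n unfolding xs_def using nonempty[of n] by (simp add: some_in_eq)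
  have xs_bounded: "norm (xs n) \<le> B" for n using B C_mono[of 0 n] xs_mem[of n] by blast
  then obtain x where x: "\<And>f::'w \<Rightarrow>\<^sub>L real. f x \<le> real_limsup (\<lambda>n. f (xs n))"
    using reflexive_limsup_point[OF refl] by blast
  have "x \<in> C N" for N
  proof (rule ccontr)
    assume "x \<notin> C N"
    then obtain f :: "'w \<Rightarrow>\<^sub>L real" and \<delta> where "\<delta> > 0" and sep: "\<And>c. c \<in> C N \<Longrightarrow> f c + \<delta> \<le> f x"
      using separation_closed_convex_point[OF closed convex nonempty] by blast
    have f_bound: "\<bar>f (xs n)\<bar> \<le> norm f * B" for n
      using norm_blinfun[of f "xs n"] mult_left_mono[OF xs_bounded[of n] norm_ge_zero[of f]] by simp
    have "real_limsup (\<lambda>n. f (xs n)) \<le> f x - \<delta>"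
    proof (rule real_limsup_le[OF f_bound])
      fix n assume "N \<le> n"
      then have "xs n \<in> C N" using xs_mem C_mono by blast
      then show "f (xs n) \<le> f x - \<delta>" using sep by fastforce
    qed
    then show False using x[of f] \<open>\<delta> > 0\<close> by simp
  qed
  then show ?thesis by blast
qed

section \<open>Minimal gradients\<close>

context
  fixes iV :: "'v::banach \<Rightarrow> 'a::real_vector"
    and iW :: "'w::banach \<Rightarrow> 'b::real_vector"
    and R :: "('a \<times> 'b) set"
  assumes gradient_space: "gradient_space iV iW R"
begin

lemma gradient_space_reflexive_W: "reflexive_space TYPE('w)"
  using gradient_space unfolding gradient_space_def by blast

lemma gradient_pair_add:
  "(iV u, iW g) \<in> R \<Longrightarrow> (iV u', iW g') \<in> R \<Longrightarrow> (iV (u + u'), iW (g + g')) \<in> R"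
  using gradient_space unfolding gradient_space_def gradient_relation_def
  by (simp add: linear_add)

lemma gradient_pair_scaleR:
  "(iV u, iW g) \<in> R \<Longrightarrow> \<alpha> > 0 \<Longrightarrow> (iV (\<alpha> *\<^sub>R u), iW (\<alpha> *\<^sub>R g)) \<in> R"
  using gradient_space unfolding gradient_space_def gradient_relation_def
  by (simp add: linear_scale)

lemma convex_gradient_pairs: "convex {(u, g). (iV u, iW g) \<in> R}"
proof (rule convexI, clarsimp)
  fix u g u' g' and a b :: real
  assume R: "(iV u, iW g) \<in> R" "(iV u', iW g') \<in> R" and "0 \<le> a" "0 \<le> b" "a + b = 1"
  then consider "a = 0" "b = 1" | "a = 1" "b = 0" | "a > 0" "b > 0" by fastforce
  then show "(iV (a *\<^sub>R u + b *\<^sub>R u'), iW (a *\<^sub>R g + b *\<^sub>R g')) \<in> R"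
    by cases (use R gradient_pair_add gradient_pair_scaleR in auto)
qed

lemma gradient_pair_of_approximations:
  assumes "\<And>n. \<exists>u h. (iV u, iW h) \<in> R \<and> norm (u - l) \<le> inverse (Suc n) \<and> norm (h - g) \<le> inverse (Suc n)"
  shows "(iV l, iW g) \<in> R"
proof -
  obtain us gs where R: "\<And>n. (iV (us n), iW (gs n)) \<in> R"
    and close: "\<And>n. norm (us n - l) \<le> inverse (Suc n)" "\<And>n. norm (gs n - g) \<le> inverse (Suc n)"
    using assms by metis
  have "(\<lambda>n. norm (l - us n)) \<longlonglongrightarrow> 0" "(\<lambda>n. norm (g - gs n)) \<longlonglongrightarrow> 0"
    using close by (auto intro!: Lim_null_comparison[OF _ LIMSEQ_inverse_real_of_nat] simp: norm_minus_commute)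
  then show ?thesis
    using gradient_space R unfolding gradient_space_def by blast
qed

lemma gradient_of_approximations:
  assumes approx: "\<And>e. e > 0 \<Longrightarrow> \<exists>u h. (iV u, iW h) \<in> R \<and> norm (u - l) \<le> e \<and> norm h \<le> m + e"
  shows "\<exists>g. (iV l, iW g) \<in> R \<and> norm g \<le> m"
proof -
  define \<delta> :: "nat \<Rightarrow> real" where "\<delta> n = inverse (Suc n)" for n
  define A where "A n = snd ` ({(u, h). (iV u, iW h) \<in> R} \<inter> cball l (\<delta> n) \<times> cball 0 (m + \<delta> n))" for n
  have mem_A: "h \<in> A n \<longleftrightarrow> (\<exists>u. (iV u, iW h) \<in> R \<and> norm (u - l) \<le> \<delta> n \<and> norm h \<le> m + \<delta> n)" for h n
    unfolding A_def by (force simp: dist_norm norm_minus_commute)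
  have \<delta>_pos: "\<delta> n > 0" and \<delta>_mono: "\<delta> (Suc n) \<le> \<delta> n" for n
    unfolding \<delta>_def by (simp_all add: le_imp_inverse_le)
  have A_bounded: "A n \<subseteq> cball 0 (m + \<delta> n)" for n
    using mem_A by auto
  obtain g where g: "\<And>n. g \<in> closure (A n)"
  proof -
    have "\<exists>g. \<forall>n. g \<in> closure (A n)"
    proof (rule reflexive_nested_closed_convex_nonempty[OF gradient_space_reflexive_W])
      show "convex (closure (A n))" for n
        unfolding A_def using convex_gradient_pairs
        by (intro convex_closure convex_linear_image linear_snd convex_Int convex_Times) auto
      show "closure (A n) \<noteq> {}" for n using approx[OF \<delta>_pos[of n]] mem_A[of _ n] by auto
      show "closure (A (Suc n)) \<subseteq> closure (A n)" for n
        using \<delta>_mono[of n] by (intro closure_mono) (force simp: mem_A)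
      show "bounded (closure (A 0))" using A_bounded
        by (intro bounded_closure bounded_subset[OF bounded_cball])
    qed simp
    then show ?thesis using that by blast
  qed
  have g_bound: "norm g \<le> m + \<delta> n" for n
    using closure_minimal[OF A_bounded[of n] closed_cball] g[of n] by auto
  have "norm g \<le> m"
  proof (rule field_le_epsilon)
    fix e :: real assume "0 < e"
    then obtain n where "inverse (Suc n) < e" using reals_Archimedean by blast
    then show "norm g \<le> m + e" using g_bound[of n] unfolding \<delta>_def by linarith
  qed
  moreover have "(iV l, iW g) \<in> R"
  proof (rule gradient_pair_of_approximations)
    fix n
    obtain h where "h \<in> A n" "dist h g < \<delta> n"
      using g[of n] \<delta>_pos[of n] unfolding closure_approachable by blast
    then show "\<exists>u h. (iV u, iW h) \<in> R \<and> norm (u - l) \<le> inverse (Suc n) \<and> norm (h - g) \<le> inverse (Suc n)"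
      unfolding mem_A \<delta>_def dist_norm by (auto intro: less_imp_le)
  qed
  ultimately show ?thesis by blast
qed

lemma min_grad_exists:
  assumes "u \<in> Sob iV iW R"
  shows "\<exists>g. (iV u, iW g) \<in> R \<and> (\<forall>g'. (iV u, iW g') \<in> R \<longrightarrow> norm g \<le> norm g')"
proof -
  define N where "N = norm ` {g. (iV u, iW g) \<in> R}"
  have "N \<noteq> {}" using assms unfolding N_def Sob_def by blast
  have "bdd_below N" unfolding N_def by (rule bdd_belowI[of _ 0]) auto
  have d_le: "Inf N \<le> norm g'" if "(iV u, iW g') \<in> R" for g'
    using that \<open>bdd_below N\<close> unfolding N_def by (intro cInf_lower) auto
  have "\<exists>g. (iV u, iW g) \<in> R \<and> norm g \<le> Inf N"
  proof (rule gradient_of_approximations)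
    fix e :: real assume "e > 0"
    then obtain g where "(iV u, iW g) \<in> R" "norm g < Inf N + e"
      using cInf_less_iff[OF \<open>N \<noteq> {}\<close> \<open>bdd_below N\<close>, of "Inf N + e"] unfolding N_def by auto
    then show "\<exists>u' h. (iV u', iW h) \<in> R \<and> norm (u' - u) \<le> e \<and> norm h \<le> Inf N + e"
      using \<open>e > 0\<close> by (intro exI[of _ u] exI[of _ g]) auto
  qed
  then show ?thesis using d_le order_trans by blast
qed

lemma min_grad_gradient: "u \<in> Sob iV iW R \<Longrightarrow> (iV u, iW (min_grad iV iW R u)) \<in> R"
  unfolding min_grad_def using someI_ex[OF min_grad_exists] by blast

lemma norm_min_grad_le:
  "u \<in> Sob iV iW R \<Longrightarrow> (iV u, iW g) \<in> R \<Longrightarrow> norm (min_grad iV iW R u) \<le> norm g"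
  unfolding min_grad_def using someI_ex[OF min_grad_exists] by blast

lemma Sob_scaleR: "u \<in> Sob iV iW R \<Longrightarrow> \<alpha> > 0 \<Longrightarrow> \<alpha> *\<^sub>R u \<in> Sob iV iW R"
  unfolding Sob_def using gradient_pair_scaleR by blast

lemma norm_min_grad_scaleR:
  assumes u: "u \<in> Sob iV iW R" and "\<alpha> > 0"
  shows "norm (min_grad iV iW R (\<alpha> *\<^sub>R u)) = \<alpha> * norm (min_grad iV iW R u)"
proof -
  have \<alpha>u: "\<alpha> *\<^sub>R u \<in> Sob iV iW R" using Sob_scaleR[OF u \<open>\<alpha> > 0\<close>] .
  have "norm (min_grad iV iW R (\<alpha> *\<^sub>R u)) \<le> norm (\<alpha> *\<^sub>R min_grad iV iW R u)"
    using norm_min_grad_le[OF \<alpha>u] gradient_pair_scaleR[OF min_grad_gradient[OF u] \<open>\<alpha> > 0\<close>] by blast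
  moreover have "(iV u, iW ((1/\<alpha>) *\<^sub>R min_grad iV iW R (\<alpha> *\<^sub>R u))) \<in> R"
    using gradient_pair_scaleR[OF min_grad_gradient[OF \<alpha>u], of "1/\<alpha>"] \<open>\<alpha> > 0\<close> by simp
  then have "norm (min_grad iV iW R u) \<le> norm ((1/\<alpha>) *\<^sub>R min_grad iV iW R (\<alpha> *\<^sub>R u))"
    using norm_min_grad_le[OF u] by blast
  ultimately show ?thesis using \<open>\<alpha> > 0\<close> by (simp add: field_simps)
qed

lemma norm_min_grad_le_of_tendsto:
  assumes lim: "us \<longlonglongrightarrow> l" and Sob: "\<And>n. us n \<in> Sob iV iW R"
    and bound: "\<And>e. e > 0 \<Longrightarrow> eventually (\<lambda>n. norm (min_grad iV iW R (us n)) \<le> m + e) sequentially"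
  shows "l \<in> Sob iV iW R" and "norm (min_grad iV iW R l) \<le> m"
proof -
  have "\<exists>g. (iV l, iW g) \<in> R \<and> norm g \<le> m"
  proof (rule gradient_of_approximations)
    fix e :: real assume "e > 0"
    have "eventually (\<lambda>n. norm (us n - l) \<le> e \<and> norm (min_grad iV iW R (us n)) \<le> m + e) sequentially"
      using tendstoD[OF lim \<open>e > 0\<close>] bound[OF \<open>e > 0\<close>]
      by eventually_elim (simp add: dist_norm)
    then obtain n where "norm (us n - l) \<le> e" "norm (min_grad iV iW R (us n)) \<le> m + e"
      using eventually_sequentially by auto
    then show "\<exists>u h. (iV u, iW h) \<in> R \<and> norm (u - l) \<le> e \<and> norm h \<le> m + e"
      using min_grad_gradient[OF Sob] by blast
  qed
  then obtain g where "(iV l, iW g) \<in> R" "norm g \<le> m" by blast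
  then show "l \<in> Sob iV iW R" and "norm (min_grad iV iW R l) \<le> m"
    using norm_min_grad_le unfolding Sob_def by (blast, force)
qed

end

section \<open>Attainment of the infimum over a Rellich--Kondrachov cone\<close>

lemma normalized_minimizing_sequence:
  assumes gradient_space: "gradient_space iV iW R" and cone: "is_cone iV iW R K"
    and nonzero: "\<exists>v \<in> K. v \<noteq> 0"
  obtains ws where "\<And>n. ws n \<in> K" "\<And>n. norm (ws n) = 1"
    "\<And>n. norm (min_grad iV iW R (ws n)) <
           (INF v \<in> {v \<in> K. v \<noteq> 0}. norm (min_grad iV iW R v) / norm v) + inverse (Suc n)"
proof -
  let ?S = "{v \<in> K. v \<noteq> 0}" and ?Q = "\<lambda>v. norm (min_grad iV iW R v) / norm v"
  have "?S \<noteq> {}" "bdd_below (?Q ` ?S)" using nonzero by (auto intro: bdd_belowI[of _ 0])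
  have "\<forall>n. \<exists>v. v \<in> ?S \<and> ?Q v < (INF v \<in> ?S. ?Q v) + inverse (Suc n)"
  proof
    fix n
    have "(INF v \<in> ?S. ?Q v) < (INF v \<in> ?S. ?Q v) + inverse (Suc n)" by simp
    then show "\<exists>v. v \<in> ?S \<and> ?Q v < (INF v \<in> ?S. ?Q v) + inverse (Suc n)"
      unfolding cINF_less_iff[OF \<open>?S \<noteq> {}\<close> \<open>bdd_below (?Q ` ?S)\<close>] by blast
  qed
  then obtain vs where vs: "\<And>n. vs n \<in> ?S" "\<And>n. ?Q (vs n) < (INF v \<in> ?S. ?Q v) + inverse (Suc n)"
    by (auto dest!: choice)
  show thesis
  proof (rule that)
    fix n
    have "vs n \<in> K" "vs n \<noteq> 0" using vs(1)[of n] by auto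
    then show "(1 / norm (vs n)) *\<^sub>R vs n \<in> K" using cone unfolding is_cone_def by simp
    show "norm ((1 / norm (vs n)) *\<^sub>R vs n) = 1" using \<open>vs n \<noteq> 0\<close> by simp
    have "vs n \<in> Sob iV iW R" using cone \<open>vs n \<in> K\<close> unfolding is_cone_def by blast
    then have "norm (min_grad iV iW R ((1 / norm (vs n)) *\<^sub>R vs n)) = ?Q (vs n)"
      using norm_min_grad_scaleR[OF gradient_space] \<open>vs n \<noteq> 0\<close> by simp
    then show "norm (min_grad iV iW R ((1 / norm (vs n)) *\<^sub>R vs n)) < (INF v \<in> ?S. ?Q v) + inverse (Suc n)"
      using vs(2) by simp
  qed
qed

lemma RK_cone_gradient_ratio_attained:
  assumes gradient_space: "gradient_space iV iW R" and RK: "RK_cone iV iW R K"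
    and nonzero: "\<exists>v \<in> K. v \<noteq> 0"
  shows "\<exists>l \<in> K. norm l = 1 \<and>
           norm (min_grad iV iW R l) = (INF v \<in> {v \<in> K. v \<noteq> 0}. norm (min_grad iV iW R v) / norm v)"
proof -
  let ?S = "{v \<in> K. v \<noteq> 0}" and ?Q = "\<lambda>v. norm (min_grad iV iW R v) / norm v"
  define m where "m = (INF v \<in> ?S. ?Q v)"
  have cone: "is_cone iV iW R K" using RK unfolding RK_cone_def by blast
  obtain ws where ws_K: "\<And>n. ws n \<in> K" and ws_norm: "\<And>n. norm (ws n) = 1"
    and ws_grad: "\<And>n. norm (min_grad iV iW R (ws n)) < m + inverse (Suc n)"
    using normalized_minimizing_sequence[OF gradient_space cone nonzero] unfolding m_def by blast
  have "norm (min_grad iV iW R (ws n)) \<le> m + 1" for n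
    using ws_grad[of n] inverse_le_1_iff[of "real (Suc n)"] by linarith
  then have "bounded (range ws)" "bounded (range (\<lambda>n. min_grad iV iW R (ws n)))"
    using ws_norm by (auto simp: bounded_iff)
  then obtain r l where "strict_mono r" "l \<in> K" and lim: "(ws \<circ> r) \<longlonglongrightarrow> l"
    using RK ws_K unfolding RK_cone_def by blast
  have "norm l = 1"
    using tendsto_norm[OF lim] ws_norm by (simp add: o_def LIMSEQ_const_iff)
  have Sob: "ws (r n) \<in> Sob iV iW R" for n using cone ws_K unfolding is_cone_def by blast
  have "eventually (\<lambda>n. norm (min_grad iV iW R ((ws \<circ> r) n)) \<le> m + e) sequentially" if "e > 0" for e
  proof -
    obtain N where N: "inverse (Suc N) < e" using reals_Archimedean[OF \<open>e > 0\<close>] by blast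
    show ?thesis
    proof (rule eventually_sequentiallyI[of N])
      fix n assume "N \<le> n"
      then have "inverse (Suc (r n)) \<le> inverse (Suc N)"
        using seq_suble[OF \<open>strict_mono r\<close>, of n] by (simp add: le_imp_inverse_le)
      then show "norm (min_grad iV iW R ((ws \<circ> r) n)) \<le> m + e"
        unfolding o_apply using ws_grad[of "r n"] N by linarith
    qed
  qed
  then have "norm (min_grad iV iW R l) \<le> m"
    using norm_min_grad_le_of_tendsto(2)[OF gradient_space lim] Sob by (simp add: o_def)
  moreover have "m \<le> ?Q l"
    unfolding m_def using \<open>l \<in> K\<close> \<open>norm l = 1\<close> by (intro cINF_lower bdd_belowI[of _ 0]) auto
  ultimately show ?thesis using \<open>l \<in> K\<close> \<open>norm l = 1\<close> unfolding m_def by force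
qed

theorem mainTheorem12:
  fixes iV :: "'v::banach \<Rightarrow> 'a::real_vector"
    and iW :: "'w::banach \<Rightarrow> 'b::real_vector"
    and R :: "('a \<times> 'b) set"
    and K :: "'v set"
  assumes "gradient_space iV iW R"
    and "RK_cone iV iW R K"
    and "regular_cone iV iW R K"
    and "\<exists>v \<in> K. v \<noteq> 0"
  shows "\<exists>u \<in> K. u \<noteq> 0 \<and>
           norm (min_grad iV iW R u) / norm u =
             (INF v \<in> {v \<in> K. v \<noteq> 0}. norm (min_grad iV iW R v) / norm v) \<and>
           (INF v \<in> {v \<in> K. v \<noteq> 0}. norm (min_grad iV iW R v) / norm v) > 0"
proof -
  obtain l where "l \<in> K" "norm l = 1"
    and attained: "norm (min_grad iV iW R l) = (INF v \<in> {v \<in> K. v \<noteq> 0}. norm (min_grad iV iW R v) / norm v)"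
    using RK_cone_gradient_ratio_attained[OF assms(1,2,4)] by blast
  then have "l \<noteq> 0" by auto
  then have "min_grad iV iW R l \<noteq> 0"
    using assms(3) \<open>l \<in> K\<close> unfolding regular_cone_def by blast
  then show ?thesis
    using \<open>l \<in> K\<close> \<open>l \<noteq> 0\<close> \<open>norm l = 1\<close> unfolding attained[symmetric] by (intro bexI[of _ l]) auto
qed

end
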